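(* Let $P$ be a well-ordered phaser and suppose $P\to^{*}Q$. Then $\neg(Q\prec P)$.
   Context: A view is a record $v=(\mathrm{sp}(v),\mathrm{wp}(v),\mathrm{mode}(v))$ with $\mathrm{sp}(v),\mathrm{wp}(v)\in\mathbb{N}$ and $\mathrm{mode}(v)\in\{\mathtt{SW},\mathtt{SO},\mathtt{WO}\}$. For a view or mode, $\mathrm{CanSignal}$ means the mode is $\mathtt{SW}$ or $\mathtt{SO}$, and $\mathrm{CanWait}$ means the mode is $\mathtt{SW}$ or $\mathtt{WO}$. A phaser $P$ is a finite partial map from task identifiers to views. For views, $v_1\prec v_2$ iff $\mathrm{CanSignal}(v_1)$, $\mathrm{sp}(v_1)<\mathrm{wp}(v_2)$ and $\mathrm{CanWait}(v_2)$; $v_1\unrhd v_2$ iff $\mathrm{mode}(v_1)=\mathtt{WO}$ or $\mathrm{sp}(v_1)\ge\mathrm{wp}(v_2)$ or $\mathrm{mode}(v_2)=\mathtt{SO}$. For phasers, $P\prec Q$ iff there exist $t\in\mathrm{dom}\,P$, $t'\in\mathrm{dom}\,Q$ with $P(t)\prec Q(t')$; $P\unrhd Q$ iff $P(t)\unrhd Q(t')$ for all $t\in\mathrm{dom}\,P$, $t'\in\mathrm{dom}\,Q$. $P$ is well-ordered iff $P\unrhd P$. Reduction $P\to_t^{o}Q$ is defined by four rules. Signal: if $P(t)=v$, $\mathrm{CanSignal}(v)$, and ($\mathrm{mode}(v)=\mathtt{SW}\Rightarrow\mathrm{wp}(v)=\mathrm{sp}(v)$), then $Q=P[t\mapsto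 v']$ with $v'$ equal to $v$ except $\mathrm{sp}(v')=\mathrm{sp}(v)+1$. Wait: if $P(t)=v$, $\mathrm{CanWait}(v)$, ($\mathrm{mode}(v)=\mathtt{SW}\Rightarrow\mathrm{wp}(v)+1=\mathrm{sp}(v)$), and $\mathrm{Sync}(P,t)$, meaning that every $t'\in\mathrm{dom}\,P$ with $\mathrm{CanSignal}(P(t'))$ has $\mathrm{sp}(P(t'))>\mathrm{wp}(v)$, then $Q=P[t\mapsto v']$ with $v'$ equal to $v$ except $\mathrm{wp}(v')=\mathrm{wp}(v)+1$. Register$(t',r)$: if $t'\notin\mathrm{dom}\,P$, $P(t)=v$, ($\mathrm{CanWait}(r)\Rightarrow\mathrm{CanWait}(v)$) and ($\mathrm{CanSignal}(r)\Rightarrow\mathrm{CanSignal}(v)$), then $Q=P[t'\mapsto(\mathrm{sp}(v),\mathrm{wp}(v),r)]$. Drop: if $t\in\mathrm{dom}\,P$, then $Q$ is $P$ with $t$ removed. $P\to Q$ means $P\to_t^{o}Q$ for some $t,o$, and $\to^{*}$ is the reflexive transitive closure of $\to$. *)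

theory Defs
  imports Main
begin

datatype mode = SW | SO | WO

record view =
  sp :: nat
  wp :: nat
  vmode :: mode

definition CanSignal :: "view \<Rightarrow> bool" where
  "CanSignal v \<longleftrightarrow> vmode v = SW \<or> vmode v = SO"

definition CanWait :: "view \<Rightarrow> bool" where
  "CanWait v \<longleftrightarrow> vmode v = SW \<or> vmode v = WO"

definition CanSignalM :: "mode \<Rightarrow> bool" where
  "CanSignalM m \<longleftrightarrow> m = SW \<or> m = SO"

definition CanWaitM :: "mode \<Rightarrow> bool" where
  "CanWaitM m \<longleftrightarrow> m = SW \<or> m = WO"

type_synonym 't phaser = "'t \<rightharpoonup> view"

definition view_prec :: "view \<Rightarrow> view \<Rightarrow> bool" where
  "view_prec v1 v2 \<longleftrightarrow> CanSignal v1 \<and> sp v1 < wp v2 \<and> CanWait v2"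

definition view_ge :: "view \<Rightarrow> view \<Rightarrow> bool" where
  "view_ge v1 v2 \<longleftrightarrow> vmode v1 = WO \<or> sp v1 \<ge> wp v2 \<or> vmode v2 = SO"

definition ph_prec :: "'t phaser \<Rightarrow> 't phaser \<Rightarrow> bool" where
  "ph_prec P Q \<longleftrightarrow> (\<exists>t t' v v'. P t = Some v \<and> Q t' = Some v' \<and> view_prec v v')"

definition ph_ge :: "'t phaser \<Rightarrow> 't phaser \<Rightarrow> bool" where
  "ph_ge P Q \<longleftrightarrow> (\<forall>t t' v v'. P t = Some v \<longrightarrow> Q t' = Some v' \<longrightarrow> view_ge v v')"

definition well_ordered :: "'t phaser \<Rightarrow> bool" where
  "well_ordered P \<longleftrightarrow> ph_ge P P"

definition Sync :: "'t phaser \<Rightarrow> 't \<Rightarrow> bool" where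
  "Sync P t \<longleftrightarrow> (\<forall>t' v v'. P t = Some v \<longrightarrow> P t' = Some v' \<longrightarrow> CanSignal v' \<longrightarrow> sp v' > wp v)"

datatype 't op = Signal | Wait | Register 't mode | Drop

inductive reduces :: "'t phaser \<Rightarrow> 't \<Rightarrow> 't op \<Rightarrow> 't phaser \<Rightarrow> bool" where
  signal: "\<lbrakk> P t = Some v; CanSignal v; vmode v = SW \<longrightarrow> wp v = sp v \<rbrakk>
     \<Longrightarrow> reduces P t Signal (P(t \<mapsto> v\<lparr>sp := sp v + 1\<rparr>))"
| wait: "\<lbrakk> P t = Some v; CanWait v; vmode v = SW \<longrightarrow> wp v + 1 = sp v; Sync P t \<rbrakk>
     \<Longrightarrow> reduces P t Wait (P(t \<mapsto> v\<lparr>wp := wp v + 1\<rparr>))"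
| register: "\<lbrakk> t' \<notin> dom P; P t = Some v; CanWaitM r \<longrightarrow> CanWait v;
               CanSignalM r \<longrightarrow> CanSignal v \<rbrakk>
     \<Longrightarrow> reduces P t (Register t' r) (P(t' \<mapsto> \<lparr>sp = sp v, wp = wp v, vmode = r\<rparr>))"
| drop: "t \<in> dom P \<Longrightarrow> reduces P t Drop (P(t := None))"

definition step :: "'t phaser \<Rightarrow> 't phaser \<Rightarrow> bool" where
  "step P Q \<longleftrightarrow> (\<exists>t o'. reduces P t o' Q)"

end

theory Submission
  imports Defs
begin

text \<open>Every reduction step only raises signal phases, raises wait phases (which do not
occur on the left of \<open>\<unrhd>\<close>), drops tasks, or registers a view copying the phases of its
registrar and able to signal only if the registrar can. Hence \<open>Q \<unrhd> P\<close> is invariant along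
\<open>P \<rightarrow>\<^sup>* Q\<close> starting from \<open>P \<unrhd> P\<close>, and \<open>\<unrhd>\<close> rules out \<open>\<prec>\<close>.\<close>

lemma view_ge_not_prec: "view_ge v w \<Longrightarrow> \<not> view_prec v w"
  by (auto simp: view_ge_def view_prec_def CanSignal_def CanWait_def)

lemma ph_ge_not_prec: "ph_ge P Q \<Longrightarrow> \<not> ph_prec P Q"
  unfolding ph_ge_def ph_prec_def using view_ge_not_prec by blast

lemma view_ge_registered:
  assumes "view_ge v w" and "CanSignalM r \<longrightarrow> CanSignal v"
  shows "view_ge \<lparr>sp = sp v, wp = wp v, vmode = r\<rparr> w"
  using assms by (cases r) (auto simp: view_ge_def CanSignalM_def CanSignal_def)

lemma reduces_preserves_ph_ge:
  assumes "reduces P t o' P'" and "ph_ge P R"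
  shows "ph_ge P' R"
  using assms
proof (induction rule: reduces.induct)
  case (register t' P t v r)
  then have "view_ge v w" if "R s = Some w" for s w
    using that by (simp add: ph_ge_def)
  with register show ?case
    by (auto simp: ph_ge_def intro: view_ge_registered)
qed (fastforce simp: ph_ge_def view_ge_def)+

lemma steps_preserve_ph_ge:
  assumes "step\<^sup>*\<^sup>* P Q" and "ph_ge P R"
  shows "ph_ge Q R"
  using assms
  by (induction rule: rtranclp_induct) (auto simp: step_def intro: reduces_preserves_ph_ge)

theorem theorem3:
  fixes P Q :: "'t phaser"
  assumes "finite (dom P)"
    and "well_ordered P"
    and "step\<^sup>*\<^sup>* P Q"
  shows "\<not> ph_prec Q P"
proof -
  have "ph_ge Q P"
    using assms(3) assms(2)[unfolded well_ordered_def] by (rule steps_preserve_ph_ge)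
  then show ?thesis by (rule ph_ge_not_prec)
qed

end
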